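(* Let $n\ge2$. Every connected component $C$ of $\widetilde P_0(S_n)$ is isomorphic to the subgraph of $P_0(\mathcal T(S_n))$ induced on the set $\mathcal T(C)$ of types of vertices of $C$ if and only if $2\le n\le 5$.
   Context: $\widetilde P_0(S_n)$: vertex set $\{[x]:x\in S_n\setminus\{\mathrm{id}\}\}$ with $[x]=\{y:\langle y\rangle=\langle x\rangle\}$, distinct $[x],[y]$ adjacent iff some representatives are one a positive power of the other. The type of $[\psi]$ is the partition $T_\psi$ of $n$ given by orbit lengths of $\langle\psi\rangle$. For a partition $T=[m_1^{t_1},\dots,m_k^{t_k}]$, $T^a=[(m_i/\gcd(a,m_i))^{t_i\gcd(a,m_i)}]_i$. $P_0(\mathcal T(S_n))$: vertices the partitions of $n$ other than $[1^n]$, distinct $T,T'$ adjacent iff one is a power of the other. *)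

theory Defs
  imports "HOL-Combinatorics.Permutations" "HOL-Library.Multiset"
begin

definition sym_grp :: "nat \<Rightarrow> (nat \<Rightarrow> nat) set" where
  "sym_grp n = {p. p permutes {..<n}}"

text \<open>Cyclic subgroup generated by a permutation (finite order, so nonnegative powers suffice).\<close>
definition cyc :: "(nat \<Rightarrow> nat) \<Rightarrow> (nat \<Rightarrow> nat) set" where
  "cyc p = {p ^^ k | k. True}"

definition pclass :: "nat \<Rightarrow> (nat \<Rightarrow> nat) \<Rightarrow> (nat \<Rightarrow> nat) set" where
  "pclass n x = {y \<in> sym_grp n. cyc y = cyc x}"

definition pg_verts :: "nat \<Rightarrow> (nat \<Rightarrow> nat) set set" where
  "pg_verts n = pclass n ` (sym_grp n - {id})"

definition pg_adj :: "(nat \<Rightarrow> nat) set \<Rightarrow> (nat \<Rightarrow> nat) set \<Rightarrow> bool" where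
  "pg_adj X Y \<longleftrightarrow> X \<noteq> Y \<and>
     (\<exists>a\<in>X. \<exists>b\<in>Y. \<exists>k::nat. k \<ge> 1 \<and> (a = b ^^ k \<or> b = a ^^ k))"

definition orbit_of :: "(nat \<Rightarrow> nat) \<Rightarrow> nat \<Rightarrow> nat set" where
  "orbit_of p i = {(p ^^ k) i | k. True}"

definition perm_type :: "nat \<Rightarrow> (nat \<Rightarrow> nat) \<Rightarrow> nat multiset" where
  "perm_type n p = image_mset card (mset_set (orbit_of p ` {..<n}))"

definition is_partition :: "nat \<Rightarrow> nat multiset \<Rightarrow> bool" where
  "is_partition n T \<longleftrightarrow> sum_mset T = n \<and> 0 \<notin># T"

definition part_pow :: "nat multiset \<Rightarrow> nat \<Rightarrow> nat multiset" where
  "part_pow T a = sum_mset (image_mset (\<lambda>m. replicate_mset (gcd a m) (m div gcd a m)) T)"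

definition type_verts :: "nat \<Rightarrow> nat multiset set" where
  "type_verts n = {T. is_partition n T \<and> T \<noteq> replicate_mset n 1}"

definition type_adj :: "nat multiset \<Rightarrow> nat multiset \<Rightarrow> bool" where
  "type_adj T T' \<longleftrightarrow> T \<noteq> T' \<and>
     (\<exists>a::nat. a \<ge> 1 \<and> (T' = part_pow T a \<or> T = part_pow T' a))"

definition types_of :: "nat \<Rightarrow> (nat \<Rightarrow> nat) set set \<Rightarrow> nat multiset set" where
  "types_of n C = {perm_type n x | x. x \<in> sym_grp n \<and> x \<noteq> id \<and> pclass n x \<in> C}"

definition graph_components :: "'a set \<Rightarrow> ('a \<Rightarrow> 'a \<Rightarrow> bool) \<Rightarrow> 'a set set" where
  "graph_components V E =
     {{y \<in> V. (x, y) \<in> {(u, v). u \<in> V \<and> v \<in> V \<and> E u v}\<^sup>*} | x. x \<in> V}"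

definition graph_iso :: "'a set \<Rightarrow> ('a \<Rightarrow> 'a \<Rightarrow> bool) \<Rightarrow> 'b set \<Rightarrow> ('b \<Rightarrow> 'b \<Rightarrow> bool) \<Rightarrow> bool" where
  "graph_iso V E W F \<longleftrightarrow>
     (\<exists>f. bij_betw f V W \<and> (\<forall>u\<in>V. \<forall>v\<in>V. E u v \<longleftrightarrow> F (f u) (f v)))"

end

(*
  For n \<le> 5 every non-identity permutation in S_n lies in a unique maximal cyclic subgroup.
  Two vertices of the reduced power graph are adjacent only if one generates a subgroup of the
  other's, so each connected component consists of the classes of the non-identity elements of
  one maximal cyclic subgroup. Inside such a subgroup distinct cyclic subgroups have distinct
  types, and containment of subgroups is reflected exactly by the power relation on types; hence
  the type map is an isomorphism onto its image. These finitely many facts about S_2, ..., S_5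
  are verified by exhaustive computation.

  For n \<ge> 6 the permutations (0 1)(2 3 4) and (0 1)(2 3 5) have the same type and generate
  different cyclic subgroups, but both cube to (0 1). So their classes are distinct vertices of
  one component with the same type, and the type map is not injective on that component.
*)

theory Submission
  imports Defs "HOL-Combinatorics.Multiset_Permutations"
begin

lemma cyc_self: "x \<in> cyc x"
  unfolding cyc_def by (rule CollectI, rule exI[of _ 1]) simp

lemma cyc_subset: "y \<in> cyc x \<Longrightarrow> cyc y \<subseteq> cyc x"
  unfolding cyc_def by (auto simp: funpow_mult)

lemma cyc_eq_iff: "cyc x = cyc y \<longleftrightarrow> x \<in> cyc y \<and> y \<in> cyc x"
  using cyc_self cyc_subset by blast

lemma cyc_id: "cyc id = {id}"
  unfolding cyc_def by auto

lemma funpow_fixed: "f a = a \<Longrightarrow> (f ^^ k) a = a"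
  by (induction k) auto

lemma not_in_cyc_if_fixes:
  assumes "p a = a" and "q a \<noteq> a"
  shows "q \<notin> cyc p"
proof
  assume "q \<in> cyc p"
  then obtain k where "q = p ^^ k"
    unfolding cyc_def by blast
  then show False
    using assms funpow_fixed[of p a k] by metis
qed

lemma sym_grp_funpow: "x \<in> sym_grp n \<Longrightarrow> x ^^ k \<in> sym_grp n"
  unfolding sym_grp_def by (induction k) (auto intro: permutes_compose)

lemma cyc_subset_sym_grp: "x \<in> sym_grp n \<Longrightarrow> cyc x \<subseteq> sym_grp n"
  unfolding cyc_def using sym_grp_funpow by blast

lemma sym_grp_mono: "x \<in> sym_grp m \<Longrightarrow> m \<le> n \<Longrightarrow> x \<in> sym_grp n"
  unfolding sym_grp_def by (auto intro: permutes_subset)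

lemma finite_sym_grp: "finite (sym_grp n)"
  unfolding sym_grp_def using finite_permutations[of "{..<n}"] by simp

lemma orbit_of_eq_image_cyc: "orbit_of p i = (\<lambda>g. g i) ` cyc p"
  unfolding orbit_of_def cyc_def by auto

lemma perm_type_cyc_cong: "cyc x = cyc y \<Longrightarrow> perm_type n x = perm_type n y"
  unfolding perm_type_def by (simp add: orbit_of_eq_image_cyc)

lemma perm_type_conj:
  assumes s: "s permutes {..<n}"
  shows "perm_type n (s \<circ> p \<circ> inv s) = perm_type n p"
proof -
  have s_inv: "s (inv s i) = i" "inv s (s i) = i" for i
    using permutes_inverses[OF s] by auto
  have "((s \<circ> p \<circ> inv s) ^^ k) i = s ((p ^^ k) (inv s i))" for k i
    by (induction k) (auto simp: s_inv)
  then have orbit: "orbit_of (s \<circ> p \<circ> inv s) i = s ` orbit_of p (inv s i)" for i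
    unfolding orbit_of_def by auto
  have "inv s ` {..<n} = {..<n}"
    using permutes_image[OF permutes_inv[OF s]] .
  then have orbits: "orbit_of (s \<circ> p \<circ> inv s) ` {..<n} = image s ` orbit_of p ` {..<n}"
    unfolding orbit by (metis image_image)
  have inj: "inj s"
    using permutes_inj[OF s] .
  then have "inj_on (image s) (orbit_of p ` {..<n})"
    by (simp add: inj_on_def inj_image_eq_iff)
  then have "perm_type n (s \<circ> p \<circ> inv s)
      = image_mset (\<lambda>A. card (s ` A)) (mset_set (orbit_of p ` {..<n}))"
    unfolding perm_type_def orbits by (simp add: image_mset_mset_set[symmetric] image_mset.compositionality o_def)
  also have "\<dots> = perm_type n p"
    unfolding perm_type_def using inj by (simp add: card_image inj_on_subset)
  finally show ?thesis .
qed

lemma pclass_self: "x \<in> sym_grp n \<Longrightarrow> x \<in> pclass n x"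
  unfolding pclass_def by simp

lemma pclass_eq_iff: "x \<in> sym_grp n \<Longrightarrow> pclass n x = pclass n y \<longleftrightarrow> cyc x = cyc y"
  unfolding pclass_def by auto

lemma pg_verts_iff: "X \<in> pg_verts n \<longleftrightarrow> (\<exists>x. x \<in> sym_grp n \<and> x \<noteq> id \<and> X = pclass n x)"
  unfolding pg_verts_def by blast

lemma finite_pg_verts: "finite (pg_verts n)"
  unfolding pg_verts_def using finite_sym_grp by simp

lemma pg_adj_pclass_iff:
  assumes "x \<in> sym_grp n" "y \<in> sym_grp n" "x \<noteq> id" "y \<noteq> id"
  shows "pg_adj (pclass n x) (pclass n y) \<longleftrightarrow> cyc x \<noteq> cyc y \<and> (x \<in> cyc y \<or> y \<in> cyc x)"
proof
  assume adj: "pg_adj (pclass n x) (pclass n y)"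
  then have "cyc x \<noteq> cyc y"
    using assms(1) pclass_eq_iff unfolding pg_adj_def by blast
  moreover obtain a b k where "a \<in> pclass n x" "b \<in> pclass n y" "a = b ^^ k \<or> b = a ^^ k"
    using adj unfolding pg_adj_def by blast
  then have "cyc a = cyc x" "cyc b = cyc y" "a \<in> cyc b \<or> b \<in> cyc a"
    unfolding pclass_def cyc_def by blast+
  then have "x \<in> cyc y \<or> y \<in> cyc x"
    using cyc_self cyc_subset by blast
  ultimately show "cyc x \<noteq> cyc y \<and> (x \<in> cyc y \<or> y \<in> cyc x)" ..
next
  assume rel: "cyc x \<noteq> cyc y \<and> (x \<in> cyc y \<or> y \<in> cyc x)"
  have "\<exists>k\<ge>1. x = y ^^ k \<or> y = x ^^ k"
  proof -
    obtain k where "x = y ^^ k \<or> y = x ^^ k"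
      using rel unfolding cyc_def by blast
    moreover from this have "k \<noteq> 0"
      using assms(3,4) by auto
    ultimately show ?thesis
      by (metis One_nat_def Suc_leI gr0I)
  qed
  moreover have "pclass n x \<noteq> pclass n y"
    using rel assms(1) pclass_eq_iff by blast
  ultimately show "pg_adj (pclass n x) (pclass n y)"
    unfolding pg_adj_def using pclass_self assms(1,2) by blast
qed

definition vertex_type :: "nat \<Rightarrow> (nat \<Rightarrow> nat) set \<Rightarrow> nat multiset" where
  "vertex_type n X = perm_type n (SOME x. x \<in> X)"

lemma vertex_type_pclass: "x \<in> sym_grp n \<Longrightarrow> vertex_type n (pclass n x) = perm_type n x"
proof -
  assume "x \<in> sym_grp n"
  then have "(SOME y. y \<in> pclass n x) \<in> pclass n x"
    by (intro someI[of "\<lambda>y. y \<in> pclass n x" x] pclass_self)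
  then have "cyc (SOME y. y \<in> pclass n x) = cyc x"
    unfolding pclass_def by blast
  then show ?thesis
    unfolding vertex_type_def by (rule perm_type_cyc_cong)
qed

lemma types_of_eq_image:
  assumes "C \<subseteq> pg_verts n"
  shows "types_of n C = vertex_type n ` C"
proof -
  have "types_of n C = (\<lambda>x. vertex_type n (pclass n x)) ` {x \<in> sym_grp n. x \<noteq> id \<and> pclass n x \<in> C}"
    unfolding types_of_def using vertex_type_pclass by auto
  also have "\<dots> = vertex_type n ` pclass n ` {x \<in> sym_grp n. x \<noteq> id \<and> pclass n x \<in> C}"
    by (simp add: image_image)
  also have "pclass n ` {x \<in> sym_grp n. x \<noteq> id \<and> pclass n x \<in> C} = C"
    using assms unfolding pg_verts_def by blast
  finally show ?thesis .
qed

section \<open>Components as maximal cyclic subgroups\<close>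

definition cyc_verts :: "nat \<Rightarrow> (nat \<Rightarrow> nat) \<Rightarrow> (nat \<Rightarrow> nat) set set" where
  "cyc_verts n g = pclass n ` (cyc g - {id})"

definition cyc_types_faithful :: "nat \<Rightarrow> (nat \<Rightarrow> nat) \<Rightarrow> bool" where
  "cyc_types_faithful n g \<longleftrightarrow>
     (\<forall>y \<in> cyc g - {id}. \<forall>z \<in> cyc g - {id}. cyc y \<noteq> cyc z \<longrightarrow>
        perm_type n y \<noteq> perm_type n z \<and>
        (type_adj (perm_type n y) (perm_type n z) \<longleftrightarrow> y \<in> cyc z \<or> z \<in> cyc y))"

lemma cyc_verts_subset_pg_verts: "g \<in> sym_grp n \<Longrightarrow> cyc_verts n g \<subseteq> pg_verts n"
  unfolding cyc_verts_def pg_verts_def using cyc_subset_sym_grp by blast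

lemma graph_iso_cyc_verts:
  assumes g: "g \<in> sym_grp n" and faithful: "cyc_types_faithful n g"
  shows "graph_iso (cyc_verts n g) pg_adj (types_of n (cyc_verts n g)) type_adj"
  unfolding graph_iso_def types_of_eq_image[OF cyc_verts_subset_pg_verts[OF g]]
proof (intro exI conjI)
  have elem: "y \<in> sym_grp n" "y \<noteq> id" if "y \<in> cyc g - {id}" for y
    using that cyc_subset_sym_grp[OF g] by auto
  show "bij_betw (vertex_type n) (cyc_verts n g) (vertex_type n ` cyc_verts n g)"
  proof (rule inj_on_imp_bij_betw, rule inj_onI)
    fix Y Z assume "Y \<in> cyc_verts n g" "Z \<in> cyc_verts n g" and eq: "vertex_type n Y = vertex_type n Z"
    then obtain y z where yz: "y \<in> cyc g - {id}" "z \<in> cyc g - {id}" "Y = pclass n y" "Z = pclass n z"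
      unfolding cyc_verts_def by blast
    moreover have "perm_type n y = perm_type n z"
      using eq yz vertex_type_pclass elem by metis
    ultimately have "cyc y = cyc z"
      using faithful unfolding cyc_types_faithful_def by blast
    then show "Y = Z"
      using yz elem pclass_eq_iff by metis
  qed
  show "\<forall>Y \<in> cyc_verts n g. \<forall>Z \<in> cyc_verts n g. pg_adj Y Z \<longleftrightarrow> type_adj (vertex_type n Y) (vertex_type n Z)"
  proof (intro ballI)
    fix Y Z assume "Y \<in> cyc_verts n g" "Z \<in> cyc_verts n g"
    then obtain y z where y: "y \<in> cyc g - {id}" "Y = pclass n y"
      and z: "z \<in> cyc g - {id}" "Z = pclass n z"
      unfolding cyc_verts_def by blast
    show "pg_adj Y Z \<longleftrightarrow> type_adj (vertex_type n Y) (vertex_type n Z)"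
    proof (cases "cyc y = cyc z")
      case True
      then have "Y = Z"
        using y z elem pclass_eq_iff by metis
      then show ?thesis
        unfolding pg_adj_def type_adj_def by simp
    next
      case False
      then show ?thesis
        using faithful pg_adj_pclass_iff[OF elem(1)[OF y(1)] elem(1)[OF z(1)] elem(2)[OF y(1)] elem(2)[OF z(1)]]
          vertex_type_pclass[OF elem(1)[OF y(1)]] vertex_type_pclass[OF elem(1)[OF z(1)]] y z
        unfolding cyc_types_faithful_def by auto
    qed
  qed
qed

definition pg_edges :: "nat \<Rightarrow> ((nat \<Rightarrow> nat) set \<times> (nat \<Rightarrow> nat) set) set" where
  "pg_edges n = {(X, Y). X \<in> pg_verts n \<and> Y \<in> pg_verts n \<and> pg_adj X Y}"

lemma graph_components_pg:
  "graph_components (pg_verts n) pg_adj =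
     {{Y \<in> pg_verts n. (X, Y) \<in> (pg_edges n)\<^sup>*} | X. X \<in> pg_verts n}"
  unfolding graph_components_def pg_edges_def ..

lemma pclass_in_pg_verts: "x \<in> sym_grp n \<Longrightarrow> x \<noteq> id \<Longrightarrow> pclass n x \<in> pg_verts n"
  unfolding pg_verts_def by blast

lemma pg_connected_within_cyc:
  assumes x: "x \<in> sym_grp n" and y: "y \<in> cyc x" "y \<noteq> id"
  shows "(pclass n x, pclass n y) \<in> (pg_edges n)\<^sup>*" "(pclass n y, pclass n x) \<in> (pg_edges n)\<^sup>*"
proof -
  have "y \<in> sym_grp n"
    using y cyc_subset_sym_grp[OF x] by blast
  moreover have "x \<noteq> id"
    using y cyc_id by auto
  ultimately have "pclass n x = pclass n y \<or>
      (pclass n x, pclass n y) \<in> pg_edges n \<and> (pclass n y, pclass n x) \<in> pg_edges n"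
    using x y pclass_eq_iff[OF x] pg_adj_pclass_iff[of x n y] pg_adj_pclass_iff[of y n x]
      pclass_in_pg_verts[of x n] pclass_in_pg_verts[of y n]
    unfolding pg_edges_def by auto
  then show "(pclass n x, pclass n y) \<in> (pg_edges n)\<^sup>*" "(pclass n y, pclass n x) \<in> (pg_edges n)\<^sup>*"
    by auto
qed

locale maximal_cyclic_generator =
  fixes n :: nat and G :: "(nat \<Rightarrow> nat) \<Rightarrow> (nat \<Rightarrow> nat)"
  assumes generator: "x \<in> sym_grp n \<Longrightarrow> x \<noteq> id \<Longrightarrow> G x \<in> sym_grp n \<and> G (G x) = G x \<and> x \<in> cyc (G x)"
    and maximal: "g \<in> sym_grp n \<Longrightarrow> G g = g \<Longrightarrow> y \<in> cyc g \<Longrightarrow> y \<noteq> id \<Longrightarrow> cyc (G y) = cyc g"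
begin

lemma same_generator_if_mem_cyc:
  assumes x: "x \<in> sym_grp n" "x \<noteq> id" and y: "y \<in> cyc x" "y \<noteq> id"
  shows "cyc (G y) = cyc (G x)"
proof -
  have "y \<in> cyc (G x)"
    using y generator[OF x] cyc_subset by blast
  then show ?thesis
    using maximal generator[OF x] y(2) by blast
qed

lemma same_generator_if_pg_adj:
  assumes "x \<in> sym_grp n" "x \<noteq> id" "y \<in> sym_grp n" "y \<noteq> id"
    and "pg_adj (pclass n x) (pclass n y)"
  shows "cyc (G x) = cyc (G y)"
  using pg_adj_pclass_iff[of x n y] assms same_generator_if_mem_cyc[of x y] same_generator_if_mem_cyc[of y x]
  by auto

lemma pg_component_eq_cyc_verts:
  assumes x0: "x0 \<in> sym_grp n" "x0 \<noteq> id"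
  shows "{Y \<in> pg_verts n. (pclass n x0, Y) \<in> (pg_edges n)\<^sup>*} = cyc_verts n (G x0)"
proof (intro equalityI subsetI)
  fix Y assume "Y \<in> {Y \<in> pg_verts n. (pclass n x0, Y) \<in> (pg_edges n)\<^sup>*}"
  then have "(pclass n x0, Y) \<in> (pg_edges n)\<^sup>*" by blast
  then have "\<exists>y. y \<in> sym_grp n \<and> y \<noteq> id \<and> Y = pclass n y \<and> cyc (G y) = cyc (G x0)"
  proof (induction rule: rtrancl_induct)
    case base
    then show ?case using x0 by blast
  next
    case (step Y Z)
    then obtain y z where y: "y \<in> sym_grp n" "y \<noteq> id" "Y = pclass n y" "cyc (G y) = cyc (G x0)"
      and z: "z \<in> sym_grp n" "z \<noteq> id" "Z = pclass n z" "pg_adj Y Z"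
      unfolding pg_edges_def pg_verts_def by blast
    then show ?case
      using same_generator_if_pg_adj[OF y(1,2) z(1,2)] by (metis (no_types))
  qed
  then obtain y where "y \<noteq> id" "Y = pclass n y" "y \<in> cyc (G x0)"
    using generator by blast
  then show "Y \<in> cyc_verts n (G x0)"
    unfolding cyc_verts_def by blast
next
  fix Y assume "Y \<in> cyc_verts n (G x0)"
  then obtain y where y: "y \<in> cyc (G x0)" "y \<noteq> id" "Y = pclass n y"
    unfolding cyc_verts_def by blast
  have Gx0: "G x0 \<in> sym_grp n" "x0 \<in> cyc (G x0)"
    using generator[OF x0] by auto
  have "(pclass n x0, pclass n (G x0)) \<in> (pg_edges n)\<^sup>*"
    using pg_connected_within_cyc(2)[OF Gx0 x0(2)] .
  also have "(pclass n (G x0), Y) \<in> (pg_edges n)\<^sup>*"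
    using pg_connected_within_cyc(1)[OF Gx0(1) y(1,2)] y(3) by simp
  finally show "Y \<in> {Y \<in> pg_verts n. (pclass n x0, Y) \<in> (pg_edges n)\<^sup>*}"
    using y cyc_subset_sym_grp[OF Gx0(1)] pclass_in_pg_verts by blast
qed

lemma graph_components_pg_eq:
  "graph_components (pg_verts n) pg_adj = {cyc_verts n (G x) | x. x \<in> sym_grp n \<and> x \<noteq> id}"
proof -
  have "{{Y \<in> pg_verts n. (X, Y) \<in> (pg_edges n)\<^sup>*} | X. X \<in> pg_verts n}
      = {{Y \<in> pg_verts n. (pclass n x, Y) \<in> (pg_edges n)\<^sup>*} | x. x \<in> sym_grp n \<and> x \<noteq> id}"
    unfolding pg_verts_iff by blast
  also have "\<dots> = {cyc_verts n (G x) | x. x \<in> sym_grp n \<and> x \<noteq> id}"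
    using pg_component_eq_cyc_verts by (intro Collect_cong) blast
  finally show ?thesis
    unfolding graph_components_pg .
qed

lemma graph_iso_components:
  assumes faithful: "\<And>g. g \<in> sym_grp n \<Longrightarrow> g \<noteq> id \<Longrightarrow> G g = g \<Longrightarrow> cyc_types_faithful n g"
  shows "\<forall>C \<in> graph_components (pg_verts n) pg_adj. graph_iso C pg_adj (types_of n C) type_adj"
  unfolding graph_components_pg_eq
proof (intro ballI, elim CollectE exE conjE)
  fix C x assume C: "C = cyc_verts n (G x)" and x: "x \<in> sym_grp n" "x \<noteq> id"
  have Gx: "G x \<in> sym_grp n" "G (G x) = G x" "x \<in> cyc (G x)"
    using generator[OF x] by auto
  have "G x \<noteq> id"
  proof
    assume "G x = id"
    then show False
      using Gx(3) x(2) cyc_id by (metis singletonD)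
  qed
  with Gx have "cyc_types_faithful n (G x)"
    using faithful by blast
  then show "graph_iso C pg_adj (types_of n C) type_adj"
    unfolding C using Gx(1) by (rule graph_iso_cyc_verts[rotated])
qed

end

section \<open>Permutations of \<open>{..<n}\<close> as lists\<close>

definition list_perm :: "nat list \<Rightarrow> nat \<Rightarrow> nat" where
  "list_perm l i = (if i < length l then l ! i else i)"

definition is_perm_list :: "nat \<Rightarrow> nat list \<Rightarrow> bool" where
  "is_perm_list n l \<longleftrightarrow> l \<in> set (permutations_of_set_list [0..<n])"

lemma is_perm_list_iff: "is_perm_list n l \<longleftrightarrow> set l = {..<n} \<and> distinct l"
proof -
  have "set (permutations_of_set_list [0..<n]) = permutations_of_set {..<n}"
    using permutations_of_list[of "[0..<n]"] by (simp add: lessThan_atLeast0)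
  then show ?thesis
    unfolding is_perm_list_def permutations_of_set_def by simp
qed

lemma is_perm_list_length: "is_perm_list n l \<Longrightarrow> length l = n"
  by (metis is_perm_list_iff card_lessThan distinct_card)

lemma is_perm_list_upt: "is_perm_list n [0..<n]"
  unfolding is_perm_list_iff by (simp add: lessThan_atLeast0)

lemma list_perm_upt: "list_perm [0..<n] = id"
  by (auto simp: list_perm_def fun_eq_iff)

lemma list_perm_sym_grp:
  assumes "is_perm_list n l"
  shows "list_perm l \<in> sym_grp n"
proof -
  have len: "length l = n" and l: "set l = {..<n}" "distinct l"
    using assms is_perm_list_length is_perm_list_iff by auto
  have "list_perm l ` {..<n} = (\<lambda>i. l ! i) ` {..<length l}"
    using len unfolding list_perm_def by auto
  also have "\<dots> = set l"
    by (auto simp: set_conv_nth)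
  finally have "list_perm l ` {..<n} = {..<n}"
    using l by simp
  moreover have "inj_on (list_perm l) {..<n}"
    using l len unfolding list_perm_def inj_on_def by (simp add: nth_eq_iff_index_eq)
  ultimately have "bij_betw (list_perm l) {..<n} {..<n}"
    by (intro bij_betw_imageI)
  moreover have "list_perm l x = x" if "x \<notin> {..<n}" for x
    using that len unfolding list_perm_def by simp
  ultimately show ?thesis
    unfolding sym_grp_def by (auto intro: bij_imp_permutes)
qed

lemma list_perm_inj: "is_perm_list n l \<Longrightarrow> is_perm_list n m \<Longrightarrow> list_perm l = list_perm m \<Longrightarrow> l = m"
proof (rule nth_equalityI)
  assume l: "is_perm_list n l" and m: "is_perm_list n m" and eq: "list_perm l = list_perm m"
  show len: "length l = length m"
    using l m is_perm_list_length by simp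
  fix i assume "i < length l"
  then show "l ! i = m ! i"
    using eq len unfolding list_perm_def by (metis)
qed

lemma list_perm_eq_id_iff: "is_perm_list n l \<Longrightarrow> list_perm l = id \<longleftrightarrow> l = [0..<n]"
  using list_perm_inj[OF _ is_perm_list_upt] list_perm_upt by metis

lemma sym_grp_as_list_perm:
  assumes "x \<in> sym_grp n"
  shows "is_perm_list n (map x [0..<n])" "list_perm (map x [0..<n]) = x"
proof -
  have x: "x permutes {..<n}"
    using assms unfolding sym_grp_def by simp
  show "is_perm_list n (map x [0..<n])"
    unfolding is_perm_list_iff using permutes_image[OF x] permutes_inj_on[OF x]
    by (simp add: distinct_map lessThan_atLeast0)
  show "list_perm (map x [0..<n]) = x"
    using permutes_not_in[OF x] by (auto simp: list_perm_def fun_eq_iff)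
qed

lemma map_list_perm_upt: "is_perm_list n l \<Longrightarrow> map (list_perm l) [0..<n] = l"
  by (rule nth_equalityI) (auto simp: is_perm_list_length list_perm_def)

definition list_comp :: "nat list \<Rightarrow> nat list \<Rightarrow> nat list" where
  "list_comp l m = map (nth l) m"

lemma list_comp_correct:
  assumes "is_perm_list n l" "is_perm_list n m"
  shows "is_perm_list n (list_comp l m)" "list_perm (list_comp l m) = list_perm l \<circ> list_perm m"
proof -
  have len: "length l = n" "length m = n"
    using assms is_perm_list_length by auto
  have lm: "set m = {..<n}" "distinct m" "set l = {..<n}" "distinct l"
    using assms is_perm_list_iff by auto
  have "inj_on (nth l) {..<n}"
    using lm len by (simp add: inj_on_def nth_eq_iff_index_eq)
  moreover have "nth l ` {..<n} = set l"
    using len by (auto simp: set_conv_nth)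
  ultimately show "is_perm_list n (list_comp l m)"
    unfolding is_perm_list_iff list_comp_def using lm by (simp add: distinct_map)
  show "list_perm (list_comp l m) = list_perm l \<circ> list_perm m"
  proof
    fix i
    show "list_perm (list_comp l m) i = (list_perm l \<circ> list_perm m) i"
      using lm len nth_mem[of i m] unfolding list_perm_def list_comp_def by auto
  qed
qed

fun power_chain :: "nat list \<Rightarrow> nat list \<Rightarrow> nat \<Rightarrow> nat list list option" where
  "power_chain l q 0 = None"
| "power_chain l q (Suc k) =
     (if q = [0..<length l] then Some [] else map_option (Cons q) (power_chain l (list_comp l q) k))"

text \<open>Elements of \<open>S\<^sub>n\<close>, \<open>n \<le> 5\<close>, have order at most 6, so 7 steps of
  \<open>power_chain\<close> always reach the identity; the empty list signals failure.\<close>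

definition powers_list :: "nat list \<Rightarrow> nat list list" where
  "powers_list l = (case power_chain l l 7 of Some L \<Rightarrow> [0..<length l] # L | None \<Rightarrow> [])"

lemma funpow_comp_self: "f ^^ k \<circ> f = f \<circ> f ^^ k"
  by (metis funpow_Suc_right funpow.simps(2))

lemma power_chain_correct:
  assumes l: "is_perm_list n l" and "is_perm_list n q" "power_chain l q k = Some L"
  shows "(\<forall>r \<in> set L. is_perm_list n r) \<and>
    (\<exists>m. map list_perm L = map (\<lambda>i. list_perm l ^^ i \<circ> list_perm q) [0..<m] \<and>
         list_perm l ^^ m \<circ> list_perm q = id)"
  using assms(2,3)
proof (induction k arbitrary: q L)
  case 0
  then show ?case by simp
next
  case (Suc k)
  have len: "length l = n"
    using l is_perm_list_length by blast
  show ?case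
  proof (cases "q = [0..<n]")
    case True
    then show ?thesis
      using Suc.prems len list_perm_upt by (intro conjI exI[of _ 0]) auto
  next
    case False
    then obtain L' where L': "power_chain l (list_comp l q) k = Some L'" "L = q # L'"
      using Suc.prems len by auto
    have lq: "is_perm_list n (list_comp l q)" "list_perm (list_comp l q) = list_perm l \<circ> list_perm q"
      using list_comp_correct[OF l Suc.prems(1)] by auto
    obtain m where m: "\<forall>r \<in> set L'. is_perm_list n r"
        "map list_perm L' = map (\<lambda>i. list_perm l ^^ i \<circ> list_perm (list_comp l q)) [0..<m]"
        "list_perm l ^^ m \<circ> list_perm (list_comp l q) = id"
      using Suc.IH[OF lq(1) L'(1)] by blast
    have "map list_perm L = map (\<lambda>i. list_perm l ^^ i \<circ> list_perm q) [0..<Suc m]"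
      using L'(2) m(2) lq(2)
      by (simp add: map_upt_Suc funpow_Suc_right o_assoc funpow_comp_self del: upt_Suc)
    moreover have "list_perm l ^^ Suc m \<circ> list_perm q = id"
      using m(3) lq(2) by (simp add: funpow_Suc_right o_assoc funpow_comp_self)
    moreover have "\<forall>r \<in> set L. is_perm_list n r"
      using m(1) L'(2) Suc.prems(1) by simp
    ultimately show ?thesis
      by blast
  qed
qed

lemma cyc_eq_powers_below:
  assumes "f ^^ m = id" "m > 0"
  shows "cyc f = {f ^^ k | k. k < m}"
proof -
  have "f ^^ k = f ^^ (k mod m)" for k
  proof -
    have "f ^^ k = f ^^ (m * (k div m) + k mod m)"
      by simp
    also have "\<dots> = (f ^^ m) ^^ (k div m) \<circ> f ^^ (k mod m)"
      by (simp only: funpow_add funpow_mult)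
    also have "\<dots> = f ^^ (k mod m)"
      using assms(1) by simp
    finally show ?thesis .
  qed
  then show ?thesis
    unfolding cyc_def using assms(2) by (metis (no_types, lifting) mod_less_divisor)
qed

lemma powers_list_correct:
  assumes l: "is_perm_list n l" and terminates: "power_chain l l 7 \<noteq> None"
  shows "\<forall>q \<in> set (powers_list l). is_perm_list n q"
    and "list_perm ` set (powers_list l) = cyc (list_perm l)"
proof -
  obtain L where L: "power_chain l l 7 = Some L"
    using terminates by blast
  have powers: "powers_list l = [0..<n] # L"
    using L is_perm_list_length[OF l] unfolding powers_list_def by simp
  obtain m where m: "\<forall>q \<in> set L. is_perm_list n q"
      "map list_perm L = map (\<lambda>i. list_perm l ^^ i \<circ> list_perm l) [0..<m]"
      "list_perm l ^^ m \<circ> list_perm l = id"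
    using power_chain_correct[OF l l L] by blast
  show "\<forall>q \<in> set (powers_list l). is_perm_list n q"
    using powers m(1) is_perm_list_upt by simp
  have "map list_perm (powers_list l) = map (\<lambda>i. list_perm l ^^ i) [0..<Suc m]"
    using powers m(2) list_perm_upt
    by (simp add: map_upt_Suc funpow_Suc_right funpow_comp_self del: upt_Suc)
  then have "list_perm ` set (powers_list l) = set (map (\<lambda>i. list_perm l ^^ i) [0..<Suc m])"
    by (metis set_map)
  also have "\<dots> = {list_perm l ^^ i | i. i < Suc m}"
    by (auto simp del: upt_Suc)
  also have "\<dots> = cyc (list_perm l)"
  proof -
    have "list_perm l ^^ Suc m = id"
      using m(3) by (simp add: funpow_Suc_right funpow_comp_self)
    then show ?thesis
      by (rule cyc_eq_powers_below[symmetric]) simp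
  qed
  finally show "list_perm ` set (powers_list l) = cyc (list_perm l)" .
qed

lemma mem_powers_list_iff:
  assumes "is_perm_list n l" "power_chain l l 7 \<noteq> None" "is_perm_list n q"
  shows "list_perm q \<in> cyc (list_perm l) \<longleftrightarrow> q \<in> set (powers_list l)"
  using powers_list_correct[OF assms(1,2)] list_perm_inj assms(3) by blast

definition orbit_list :: "nat list list \<Rightarrow> nat \<Rightarrow> nat list" where
  "orbit_list P i = sort (remdups (map (\<lambda>q. q ! i) P))"

definition type_list :: "nat list \<Rightarrow> nat list" where
  "type_list l = sort (map length (remdups (map (orbit_list (powers_list l)) [0..<length l])))"

lemma perm_type_list_perm:
  assumes l: "is_perm_list n l" and terminates: "power_chain l l 7 \<noteq> None"
  shows "perm_type n (list_perm l) = mset (type_list l)"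
proof -
  let ?P = "powers_list l"
  define orbits where "orbits = map (orbit_list ?P) [0..<n]"
  have len: "length l = n"
    using l is_perm_list_length by blast
  have "orbit_of (list_perm l) i = set (orbit_list ?P i)" if "i < n" for i
  proof -
    have "list_perm q i = q ! i" if "q \<in> set ?P" for q
      using powers_list_correct(1)[OF l terminates] that \<open>i < n\<close> is_perm_list_length
      unfolding list_perm_def by metis
    then have "(\<lambda>g. g i) ` list_perm ` set ?P = (\<lambda>q. q ! i) ` set ?P"
      by (auto simp: image_image)
    then show ?thesis
      unfolding orbit_of_eq_image_cyc powers_list_correct(2)[OF l terminates, symmetric] orbit_list_def
      by simp
  qed
  then have orbit_sets: "orbit_of (list_perm l) ` {..<n} = set ` set orbits"
    unfolding orbits_def by (auto simp: image_image)
  have "inj_on set (set orbits)"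
    unfolding orbits_def orbit_list_def by (auto intro!: inj_onI intro: sorted_distinct_set_unique)
  then have "perm_type n (list_perm l) = image_mset card (image_mset set (mset_set (set orbits)))"
    unfolding perm_type_def orbit_sets by (simp add: image_mset_mset_set)
  also have "mset_set (set orbits) = mset (remdups orbits)"
    by (metis distinct_remdups mset_set_set set_remdups)
  also have "image_mset card (image_mset set (mset (remdups orbits))) = mset (map (\<lambda>q. card (set q)) (remdups orbits))"
    by (simp add: image_mset.compositionality o_def)
  also have "map (\<lambda>q. card (set q)) (remdups orbits) = map length (remdups orbits)"
  proof (rule map_cong[OF refl])
    fix q assume "q \<in> set (remdups orbits)"
    then have "distinct q"
      unfolding orbits_def orbit_list_def by auto
    then show "card (set q) = length q"
      by (rule distinct_card)
  qed
  also have "mset (map length (remdups orbits)) = mset (type_list l)"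
    unfolding type_list_def orbits_def len by simp
  finally show ?thesis .
qed

definition part_pow_list :: "nat list \<Rightarrow> nat \<Rightarrow> nat list" where
  "part_pow_list T a = concat (map (\<lambda>m. replicate (gcd a m) (m div gcd a m)) T)"

lemma part_pow_mset: "part_pow (mset T) a = mset (part_pow_list T a)"
  unfolding part_pow_def part_pow_list_def by (induction T) auto

definition parts_divide :: "nat list \<Rightarrow> nat list \<Rightarrow> bool" where
  "parts_divide T T' \<longleftrightarrow> (\<forall>p \<in> set T'. \<exists>q \<in> set T. p dvd q)"

lemma parts_divide_part_pow: "mset T' = part_pow (mset T) a \<Longrightarrow> parts_divide T T'"
  unfolding parts_divide_def
proof
  fix p assume "mset T' = part_pow (mset T) a" "p \<in> set T'"
  then have "p \<in> set (part_pow_list T a)"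
    by (metis part_pow_mset set_mset_mset)
  then obtain m where m: "m \<in> set T" "p = m div gcd a m"
    unfolding part_pow_list_def by (auto split: if_splits)
  then have "p dvd m"
    by (metis dvd_div_mult_self gcd_dvd2 dvd_triv_left)
  with m(1) show "\<exists>q \<in> set T. p dvd q" ..
qed

section \<open>Exhaustive verification for \<open>n \<le> 5\<close>\<close>

definition type_pow_of :: "nat list \<Rightarrow> nat list \<Rightarrow> nat \<Rightarrow> bool" where
  "type_pow_of T T' k \<longleftrightarrow> list_ex (\<lambda>a. sort T = sort (part_pow_list T' a)) [1..<k]"

lemma type_adj_if_type_pow_of:
  assumes "type_pow_of T T' k" "mset T \<noteq> mset T'"
  shows "type_adj (mset T) (mset T')"
proof -
  obtain a where a: "a \<ge> 1" "sort T = sort (part_pow_list T' a)"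
    using assms(1) unfolding type_pow_of_def list_ex_iff by auto
  then have "mset T = part_pow (mset T') a"
    by (metis mset_sort part_pow_mset)
  then show ?thesis
    unfolding type_adj_def using a(1) assms(2) by blast
qed

lemma not_type_adj_if_not_parts_divide:
  assumes "\<not> parts_divide T T'" "\<not> parts_divide T' T"
  shows "\<not> type_adj (mset T) (mset T')"
  using assms parts_divide_part_pow unfolding type_adj_def by metis

definition pair_ok :: "nat list \<times> nat list list \<times> nat list \<Rightarrow> nat list \<times> nat list list \<times> nat list \<Rightarrow> bool" where
  "pair_ok = (\<lambda>(q, Pq, Tq) (r, Pr, Tr).
     q \<in> set Pr \<and> r \<in> set Pq \<or>
     Tq \<noteq> Tr \<and>
       (if q \<in> set Pr then type_pow_of Tq Tr (length Pr)
        else if r \<in> set Pq then type_pow_of Tr Tq (length Pq)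
        else \<not> parts_divide Tq Tr \<and> \<not> parts_divide Tr Tq))"

lemma pair_ok_sound:
  assumes q: "is_perm_list n q" "power_chain q q 7 \<noteq> None"
    and r: "is_perm_list n r" "power_chain r r 7 \<noteq> None"
    and ok: "pair_ok (q, powers_list q, type_list q) (r, powers_list r, type_list r)"
    and ne: "cyc (list_perm q) \<noteq> cyc (list_perm r)"
  shows "perm_type n (list_perm q) \<noteq> perm_type n (list_perm r) \<and>
    (type_adj (perm_type n (list_perm q)) (perm_type n (list_perm r)) \<longleftrightarrow>
       list_perm q \<in> cyc (list_perm r) \<or> list_perm r \<in> cyc (list_perm q))"
proof -
  have qr: "list_perm q \<in> cyc (list_perm r) \<longleftrightarrow> q \<in> set (powers_list r)"
    and rq: "list_perm r \<in> cyc (list_perm q) \<longleftrightarrow> r \<in> set (powers_list q)"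
    using mem_powers_list_iff q r by blast+
  have not_both: "\<not> (q \<in> set (powers_list r) \<and> r \<in> set (powers_list q))"
    using ne cyc_eq_iff qr rq by blast
  have "sorted (type_list q)" "sorted (type_list r)" "type_list q \<noteq> type_list r"
    using ok not_both unfolding pair_ok_def type_list_def by auto
  then have mset_ne: "mset (type_list q) \<noteq> mset (type_list r)"
    by (metis properties_for_sort)
  have "type_adj (mset (type_list q)) (mset (type_list r)) \<longleftrightarrow>
      q \<in> set (powers_list r) \<or> r \<in> set (powers_list q)"
  proof (cases "q \<in> set (powers_list r) \<or> r \<in> set (powers_list q)")
    case True
    then have "type_pow_of (type_list q) (type_list r) (length (powers_list r)) \<or>
        type_pow_of (type_list r) (type_list q) (length (powers_list q))"
      using ok not_both unfolding pair_ok_def by (auto split: if_splits)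
    then show ?thesis
      using True mset_ne type_adj_if_type_pow_of type_adj_def by metis
  next
    case False
    then show ?thesis
      using ok not_both not_type_adj_if_not_parts_divide unfolding pair_ok_def by auto
  qed
  then show ?thesis
    using mset_ne perm_type_list_perm q r qr rq by simp
qed

text \<open>For \<open>n \<le> 5\<close> a generator of the maximal cyclic subgroup containing \<open>l\<close>:
  a transposition with three fixed points is multiplied by a 3-cycle on them, a 3-cycle with
  two fixed points by their transposition, and \<open>(a b)(c d)\<close> becomes \<open>(a c b d)\<close>, whose
  square it is; every other permutation is returned unchanged.\<close>

definition generator_list :: "nat list \<Rightarrow> nat list" where
  "generator_list l =
     (let moved = filter (\<lambda>i. l ! i \<noteq> i) [0..<length l]; fixed = filter (\<lambda>i. l ! i = i) [0..<length l] in
      if length moved = 2 \<and> length fixed = 3 then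
        l[fixed ! 0 := fixed ! 1, fixed ! 1 := fixed ! 2, fixed ! 2 := fixed ! 0]
      else if length moved = 3 \<and> length fixed = 2 then
        l[fixed ! 0 := fixed ! 1, fixed ! 1 := fixed ! 0]
      else if length moved = 4 \<and> list_comp l l = [0..<length l] then
        (let a = moved ! 0; b = l ! a; c = hd (filter (\<lambda>i. i \<noteq> a \<and> i \<noteq> b) moved); d = l ! c
         in l[a := c, c := b, b := d, d := a])
      else l)"

definition check_generator :: "nat \<Rightarrow> bool" where
  "check_generator n \<longleftrightarrow>
     list_all (\<lambda>l. power_chain l l 7 \<noteq> None \<and>
         (l = [0..<n] \<or>
          distinct (generator_list l) \<and> set (generator_list l) = set [0..<n] \<and>
          generator_list (generator_list l) = generator_list l \<and>
          l \<in> set (powers_list (generator_list l))))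
       (permutations_of_set_list [0..<n])"

definition check_maximal :: "nat \<Rightarrow> bool" where
  "check_maximal n \<longleftrightarrow>
     list_all (\<lambda>g. g = [0..<n] \<or> generator_list g \<noteq> g \<or>
         list_all (\<lambda>y. y = [0..<n] \<or>
             generator_list y \<in> set (powers_list g) \<and> g \<in> set (powers_list (generator_list y)))
           (powers_list g))
       (permutations_of_set_list [0..<n])"

definition check_types :: "nat \<Rightarrow> bool" where
  "check_types n \<longleftrightarrow>
     list_all (\<lambda>g. g = [0..<n] \<or> generator_list g \<noteq> g \<or>
         (let D = map (\<lambda>q. (q, powers_list q, type_list q)) (filter (\<lambda>q. q \<noteq> [0..<n]) (powers_list g))
          in list_all (\<lambda>Y. list_all (pair_ok Y) D) D))
       (permutations_of_set_list [0..<n])"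

lemma checks_2_to_5:
  "check_generator 2 \<and> check_maximal 2 \<and> check_types 2"
  "check_generator 3 \<and> check_maximal 3 \<and> check_types 3"
  "check_generator 4 \<and> check_maximal 4 \<and> check_types 4"
  "check_generator 5 \<and> check_maximal 5 \<and> check_types 5"
  by code_simp+

lemma check_generator_terminates:
  "check_generator n \<Longrightarrow> is_perm_list n l \<Longrightarrow> power_chain l l 7 \<noteq> None"
  unfolding check_generator_def list_all_iff is_perm_list_def by blast

lemma check_generator_generator_list:
  assumes "check_generator n" "is_perm_list n l" "l \<noteq> [0..<n]"
  shows "is_perm_list n (generator_list l)" "generator_list (generator_list l) = generator_list l"
    "l \<in> set (powers_list (generator_list l))"
  using assms unfolding check_generator_def list_all_iff is_perm_list_def[of n l]
  by (auto simp: is_perm_list_iff lessThan_atLeast0)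

lemma mem_cyc_list_perm:
  assumes "is_perm_list n l" "power_chain l l 7 \<noteq> None" "y \<in> cyc (list_perm l)"
  obtains q where "is_perm_list n q" "q \<in> set (powers_list l)" "y = list_perm q"
  using powers_list_correct[OF assms(1,2)] assms(3) by blast

definition list_generator :: "nat \<Rightarrow> (nat \<Rightarrow> nat) \<Rightarrow> (nat \<Rightarrow> nat)" where
  "list_generator n x = list_perm (generator_list (map x [0..<n]))"

lemma list_generator_list_perm:
  "is_perm_list n l \<Longrightarrow> list_generator n (list_perm l) = list_perm (generator_list l)"
  unfolding list_generator_def by (simp add: map_list_perm_upt)

lemma maximal_cyclic_generator_if_checks:
  assumes gen: "check_generator n" and max: "check_maximal n"
  shows "maximal_cyclic_generator n (list_generator n)"
proof
  fix x assume x: "x \<in> sym_grp n" "x \<noteq> id"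
  define l where "l = map x [0..<n]"
  have l: "is_perm_list n l" "l \<noteq> [0..<n]" "x = list_perm l"
    using sym_grp_as_list_perm[OF x(1)] x(2) list_perm_eq_id_iff unfolding l_def by metis+
  note g = check_generator_generator_list[OF gen l(1,2)]
  show "list_generator n x \<in> sym_grp n \<and> list_generator n (list_generator n x) = list_generator n x \<and>
      x \<in> cyc (list_generator n x)"
    using g l list_generator_list_perm list_perm_sym_grp
      mem_powers_list_iff[OF g(1) check_generator_terminates[OF gen g(1)] l(1)] by simp
next
  fix g y assume g: "g \<in> sym_grp n" "list_generator n g = g" and y: "y \<in> cyc g" "y \<noteq> id"
  define m where "m = map g [0..<n]"
  have m: "is_perm_list n m" "g = list_perm m"
    using sym_grp_as_list_perm[OF g(1)] unfolding m_def by simp_all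
  have "g \<noteq> id"
    using y cyc_id by auto
  then have m_ne: "m \<noteq> [0..<n]"
    using m list_perm_upt by auto
  have "list_perm (generator_list m) = list_perm m"
    using g(2) m list_generator_list_perm by simp
  then have m_fixed: "generator_list m = m"
    using list_perm_inj check_generator_generator_list(1)[OF gen m(1) m_ne] m(1) by blast
  obtain q where q: "is_perm_list n q" "q \<in> set (powers_list m)" "y = list_perm q"
    using mem_cyc_list_perm[OF m(1) check_generator_terminates[OF gen m(1)]] y(1) m(2) by metis
  have q_ne: "q \<noteq> [0..<n]"
    using q(3) y(2) list_perm_upt by auto
  have "generator_list q \<in> set (powers_list m)" "m \<in> set (powers_list (generator_list q))"
    using max m(1) m_ne m_fixed q(2) q_ne unfolding check_maximal_def list_all_iff is_perm_list_def by blast+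
  then show "cyc (list_generator n y) = cyc g"
    unfolding cyc_eq_iff using q m check_generator_generator_list(1)[OF gen q(1) q_ne]
      mem_powers_list_iff check_generator_terminates[OF gen] list_generator_list_perm by metis
qed

lemma cyc_types_faithful_if_checks:
  assumes gen: "check_generator n" and types: "check_types n"
    and g: "g \<in> sym_grp n" "g \<noteq> id" "list_generator n g = g"
  shows "cyc_types_faithful n g"
  unfolding cyc_types_faithful_def
proof (intro ballI impI)
  define m where "m = map g [0..<n]"
  have m: "is_perm_list n m" "g = list_perm m"
    using sym_grp_as_list_perm[OF g(1)] unfolding m_def by simp_all
  have m_ne: "m \<noteq> [0..<n]"
    using m g(2) list_perm_upt by auto
  have "generator_list m = m"
    using g(3) m list_generator_list_perm list_perm_inj check_generator_generator_list(1)[OF gen m(1) m_ne]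
    by metis
  then have ok: "pair_ok (q, powers_list q, type_list q) (r, powers_list r, type_list r)"
    if "q \<in> set (powers_list m)" "q \<noteq> [0..<n]" "r \<in> set (powers_list m)" "r \<noteq> [0..<n]" for q r
    using types m(1) m_ne that unfolding check_types_def list_all_iff is_perm_list_def Let_def by auto
  have elem: "\<exists>q. is_perm_list n q \<and> q \<in> set (powers_list m) \<and> q \<noteq> [0..<n] \<and> y = list_perm q"
    if "y \<in> cyc g - {id}" for y
    using that mem_cyc_list_perm[OF m(1) check_generator_terminates[OF gen m(1)]] m(2) list_perm_upt
    by (metis DiffE singletonI)
  fix y z assume "y \<in> cyc g - {id}" "z \<in> cyc g - {id}" "cyc y \<noteq> cyc z"
  then show "perm_type n y \<noteq> perm_type n z \<and>
      (type_adj (perm_type n y) (perm_type n z) \<longleftrightarrow> y \<in> cyc z \<or> z \<in> cyc y)"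
    using elem ok pair_ok_sound check_generator_terminates[OF gen] by metis
qed

lemma graph_iso_components_if_checks:
  assumes "check_generator n" "check_maximal n" "check_types n"
  shows "\<forall>C \<in> graph_components (pg_verts n) pg_adj. graph_iso C pg_adj (types_of n C) type_adj"
proof -
  interpret maximal_cyclic_generator n "list_generator n"
    using assms(1,2) by (rule maximal_cyclic_generator_if_checks)
  show ?thesis
    using assms(1,3) cyc_types_faithful_if_checks by (intro graph_iso_components)
qed

section \<open>A type collision for \<open>n \<ge> 6\<close>\<close>

lemma not_graph_iso_if_type_collision:
  assumes C: "finite C" "C \<subseteq> pg_verts n"
    and XY: "X \<in> C" "Y \<in> C" "X \<noteq> Y" "vertex_type n X = vertex_type n Y"
  shows "\<not> graph_iso C pg_adj (types_of n C) type_adj"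
proof
  assume "graph_iso C pg_adj (types_of n C) type_adj"
  then have "card (vertex_type n ` C) = card C"
    unfolding graph_iso_def types_of_eq_image[OF C(2)] by (metis bij_betw_same_card)
  then have "inj_on (vertex_type n) C"
    using C(1) by (simp add: inj_on_iff_eq_card)
  then show False
    using XY by (meson inj_onD)
qed

lemma pg_component_of_mem:
  assumes "X \<in> pg_verts n"
  shows "{Y \<in> pg_verts n. (X, Y) \<in> (pg_edges n)\<^sup>*} \<in> graph_components (pg_verts n) pg_adj"
  unfolding graph_components_pg using assms by blast

lemma same_type_cube_roots_ge6:
  assumes n: "n \<ge> 6"
  obtains t x1 x2 where "t \<in> sym_grp n" "x1 \<in> sym_grp n" "x2 \<in> sym_grp n" "t \<noteq> id" "x1 \<noteq> id" "x2 \<noteq> id"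
    "pg_adj (pclass n t) (pclass n x1)" "pg_adj (pclass n t) (pclass n x2)"
    "pclass n x1 \<noteq> pclass n x2" "perm_type n x1 = perm_type n x2"
proof -
  define t where "t = list_perm [1, 0]"
  define x1 where "x1 = list_perm [1, 0, 3, 4, 2]"
  define x2 where "x2 = list_perm [1, 0, 3, 5, 4, 2]"
  define s :: "nat \<Rightarrow> nat" where "s = transpose 4 5"
  have "is_perm_list 2 [1, 0]" "is_perm_list 5 [1, 0, 3, 4, 2]" "is_perm_list 6 [1, 0, 3, 5, 4, 2]"
    unfolding is_perm_list_iff by code_simp+
  then have S: "t \<in> sym_grp n" "x1 \<in> sym_grp n" "x2 \<in> sym_grp n"
    unfolding t_def x1_def x2_def using list_perm_sym_grp sym_grp_mono n by fastforce+
  have s: "s permutes {..<n}"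
    unfolding s_def using n by (intro permutes_swap_id) auto
  have below6: "f = g" if "\<And>i. i < 6 \<Longrightarrow> f i = g i" "\<And>i. i \<ge> 6 \<Longrightarrow> f i = g i" for f g :: "nat \<Rightarrow> nat"
    using that by (metis ext not_le)
  note evaluate = t_def x1_def x2_def s_def list_perm_def transpose_def numeral_3_eq_3 less_Suc_eq numeral_eq_Suc
  have cube1: "x1 ^^ 3 = t"
    by (rule below6) (auto simp: evaluate)
  have cube2: "x2 ^^ 3 = t"
    by (rule below6) (auto simp: evaluate)
  have conj: "x2 = s \<circ> x1 \<circ> inv s"
    by (rule below6) (auto simp: evaluate)
  have fixed: "t 2 = 2" "x2 4 = 4" and moved: "t 0 \<noteq> 0" "x1 2 \<noteq> 2" "x1 4 \<noteq> 4" "x2 2 \<noteq> 2"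
    unfolding t_def x1_def x2_def list_perm_def by simp_all
  have not_id: "t \<noteq> id" "x1 \<noteq> id" "x2 \<noteq> id"
    using fixed moved by auto
  have "t \<in> cyc x" if "x ^^ 3 = t" for x
    unfolding cyc_def using that by blast
  then have "t \<in> cyc x1" "t \<in> cyc x2"
    using cube1 cube2 by blast+
  moreover have "x1 \<notin> cyc t" "x2 \<notin> cyc t"
    using not_in_cyc_if_fixes[of t 2] fixed(1) moved(2,4) by blast+
  ultimately have adj: "pg_adj (pclass n t) (pclass n x1)" "pg_adj (pclass n t) (pclass n x2)"
    using S not_id pg_adj_pclass_iff cyc_self by metis+
  moreover have "pclass n x1 \<noteq> pclass n x2"
    using pclass_eq_iff[OF S(2)] not_in_cyc_if_fixes[of x2 4 x1] fixed(2) moved(3) cyc_self by blast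
  moreover have "perm_type n x1 = perm_type n x2"
    using perm_type_conj[OF s] conj by simp
  ultimately show ?thesis
    using that S not_id by blast
qed

lemma not_graph_iso_components_ge6:
  assumes "n \<ge> 6"
  shows "\<not> (\<forall>C \<in> graph_components (pg_verts n) pg_adj. graph_iso C pg_adj (types_of n C) type_adj)"
proof -
  obtain t x1 x2 where S: "t \<in> sym_grp n" "x1 \<in> sym_grp n" "x2 \<in> sym_grp n"
    and not_id: "t \<noteq> id" "x1 \<noteq> id" "x2 \<noteq> id"
    and adj: "pg_adj (pclass n t) (pclass n x1)" "pg_adj (pclass n t) (pclass n x2)"
    and ne: "pclass n x1 \<noteq> pclass n x2" and same_type: "perm_type n x1 = perm_type n x2"
    using same_type_cube_roots_ge6[OF assms] .
  define C where "C = {Y \<in> pg_verts n. (pclass n t, Y) \<in> (pg_edges n)\<^sup>*}"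
  have "pclass n x1 \<in> C" "pclass n x2 \<in> C"
    unfolding C_def pg_edges_def using adj S not_id pclass_in_pg_verts by blast+
  moreover have "vertex_type n (pclass n x1) = vertex_type n (pclass n x2)"
    using S vertex_type_pclass same_type by simp
  moreover have "finite C" "C \<subseteq> pg_verts n"
    unfolding C_def using finite_pg_verts finite_subset by auto
  moreover have "C \<in> graph_components (pg_verts n) pg_adj"
    unfolding C_def using S(1) not_id(1) pclass_in_pg_verts by (intro pg_component_of_mem)
  ultimately show ?thesis
    using ne not_graph_iso_if_type_collision by blast
qed

theorem corollary7p9:
  fixes n :: nat
  assumes "n \<ge> 2"
  shows "(\<forall>C \<in> graph_components (pg_verts n) pg_adj.
            graph_iso C pg_adj (types_of n C) type_adj)
         \<longleftrightarrow> n \<le> 5"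
proof (cases "n \<le> 5")
  case True
  with assms have "n = 2 \<or> n = 3 \<or> n = 4 \<or> n = 5"
    by arith
  then show ?thesis
    using True checks_2_to_5 graph_iso_components_if_checks by blast
next
  case False
  then show ?thesis
    using not_graph_iso_components_ge6[of n] by simp
qed

end
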